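(* Let $I_n$ denote the number of inversion sequences of length $n$ avoiding all of the patterns $110,120,201,210$ (with $I_0=1$). Consider the polynomial in $x$ $$K(x)=z^2x^4-z^2x^3-2zx^3+3zx^2+x^2-2zx-2x+1.$$ It has exactly two roots $X_1,X_2$ that are formal Puiseux series in $z$ (in powers of $z^{1/2}$) tending to $1$ as $z\to0$, namely $X_1=1-z^{1/2}+z-2z^{3/2}+\tfrac72z^2-\cdots$ and $X_2=1+z^{1/2}+z+2z^{3/2}+\tfrac72z^2+\cdots$ (the other two roots diverge as $z\to0$). Then $$\sum_{n\ge0}I_nz^n=\frac{(X_1-1)(X_2-1)(zX_1X_2-1)}{X_1X_2z\,(X_1X_2z-X_1z-X_2z+z+1)}=1+z+2z^2+6z^3+22z^4+90z^5+396z^6+1833z^7+\cdots.$$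
   Context: An inversion sequence of length $n$ is an integer sequence $(a_1,\dots,a_n)$ with $0\le a_i<i$ for all $i$. A pattern is a sequence $\sigma$ of non-negative integers containing every value from $0$ to $\max(\sigma)$; the reduction of a sequence replaces its smallest values by $0$, the next smallest by $1$, etc. A sequence $a$ contains $\sigma$ if some (not necessarily consecutive) subsequence of $a$ has reduction $\sigma$; otherwise $a$ avoids $\sigma$. Equivalently, these are the inversion sequences with no $i<j<k$ such that $a_j\ne a_k$ and $a_i>a_k$. *)

theory Defs
  imports Main "HOL-Computational_Algebra.Formal_Laurent_Series"
begin

definition reduction :: "nat list \<Rightarrow> nat list" where
  "reduction s = map (\<lambda>v. card {w \<in> set s. w < v}) s"

definition contains_pattern :: "nat list \<Rightarrow> nat list \<Rightarrow> bool" where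
  "contains_pattern a \<sigma> \<longleftrightarrow> (\<exists>s \<in> set (subseqs a). reduction s = \<sigma>)"

definition avoids :: "nat list \<Rightarrow> nat list \<Rightarrow> bool" where
  "avoids a \<sigma> \<longleftrightarrow> \<not> contains_pattern a \<sigma>"

text \<open>Inversion sequences of length n, stored 0-indexed: entry a!i (i.e. a_{i+1}) satisfies a!i \<le> i.\<close>
definition inversion_seqs :: "nat \<Rightarrow> nat list set" where
  "inversion_seqs n = {a. length a = n \<and> (\<forall>i<n. a ! i \<le> i)}"

definition I_count :: "nat \<Rightarrow> nat" where
  "I_count n = card {a \<in> inversion_seqs n.
     avoids a [1,1,0] \<and> avoids a [1,2,0] \<and> avoids a [2,0,1] \<and> avoids a [2,1,0]}"

text \<open>The kernel polynomial K(x) with z replaced by t^2, as a function on power series in t.\<close>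
definition Kt :: "real fps \<Rightarrow> real fps" where
  "Kt X = (let Z = fps_X ^ 2 in
     Z^2 * X^4 - Z^2 * X^3 - 2 * Z * X^3 + 3 * Z * X^2 + X^2 - 2 * Z * X - 2 * X + 1)"

end

theory Submission
  imports Defs "HOL-Library.Sublist"
begin

(* Avoiding 110, 120, 201 and 210 means having no i < j < k with a_i > a_k and a_j \<noteq> a_k.
   Such a sequence a stays good after appending v iff v = last a or v \<ge> max (butlast a).
   Recording the slack n - max a and the number of admissible values below max a turns this
   into a generating tree, hence into a functional equation for the generating function W(u)
   with a catalytic variable u and a quartic kernel.  The two power-series roots U1, U2 of the
   kernel eliminate W and leave two linear equations for the counting series F and the
   total-slack series D; eliminating D expresses F through U1 + U2 and U1 U2.  The other two
   roots of the kernel are 1/(z X1) and 1/(z X2), and Vieta's relations rewrite the result in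
   terms of X1, X2.  All series are power series in t with z = t^2, and all roots are obtained
   as fixed points of contractions. *)

lemma subseq_snoc_iff:
  "subseq xs (ys @ [v]) \<longleftrightarrow> subseq xs ys \<or> (\<exists>zs. xs = zs @ [v] \<and> subseq zs ys)"
proof
  assume "subseq xs (ys @ [v])"
  then obtain xs1 xs2 where "xs = xs1 @ xs2" "subseq xs1 ys" "subseq xs2 [v]"
    by (auto simp: subseq_append_iff)
  moreover have "xs2 = [] \<or> xs2 = [v]"
    using \<open>subseq xs2 [v]\<close> by (cases xs2) (auto split: if_splits)
  ultimately show "subseq xs ys \<or> (\<exists>zs. xs = zs @ [v] \<and> subseq zs ys)" by auto
qed (auto intro: list_emb_append_mono)

lemma subseq_triple_snoc_iff:
  "subseq [x, y, w] (a @ [v]) \<longleftrightarrow> subseq [x, y, w] a \<or> (w = v \<and> subseq [x, y] a)"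
  by (auto simp: subseq_snoc_iff)

lemma subseq_pair_snoc_iff:
  "subseq [x, y] (a @ [v]) \<longleftrightarrow> subseq [x, y] a \<or> (y = v \<and> x \<in> set a)"
  by (auto simp: subseq_snoc_iff subseq_singleton_left)

lemma subseq_pair_imp_in_set: "subseq [x, y] a \<Longrightarrow> x \<in> set a"
  by (metis list.set_intros(1) subseq_order.dual_order.trans subseq_singleton_left subseq_Cons2 subseq_Cons')

definition has_forbidden_triple :: "nat list \<Rightarrow> bool" where
  "has_forbidden_triple a \<longleftrightarrow> (\<exists>x y w. subseq [x, y, w] a \<and> w < x \<and> y \<noteq> w)"

lemma reduction_triple_in_patterns_iff:
  "reduction [x, y, w] \<in> {[1,1,0], [1,2,0], [2,0,1], [2,1,0]} \<longleftrightarrow> w < x \<and> y \<noteq> w"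
proof -
  have filter_triple: "{u \<in> set [x, y, w]. u < v} =
      (if x < v then {x} else {}) \<union> (if y < v then {y} else {}) \<union> (if w < v then {w} else {})" for v
    by auto
  show ?thesis
    unfolding reduction_def list.map filter_triple
    by (cases x y rule: linorder_cases; cases y w rule: linorder_cases; cases x w rule: linorder_cases)
       (simp_all add: card_insert_if)
qed

lemma avoids_patterns_iff:
  "(avoids a [1,1,0] \<and> avoids a [1,2,0] \<and> avoids a [2,0,1] \<and> avoids a [2,1,0])
     \<longleftrightarrow> \<not> has_forbidden_triple a"
proof -
  let ?pats = "{[1,1,0], [1,2,0], [2,0,1], [2,1,0]} :: nat list set"
  have "(\<exists>s. subseq s a \<and> reduction s \<in> ?pats) \<longleftrightarrow> has_forbidden_triple a"
  proof
    assume "\<exists>s. subseq s a \<and> reduction s \<in> ?pats"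
    then obtain s where s: "subseq s a" "reduction s \<in> ?pats" by blast
    have "length s = length (reduction s)"
      by (simp add: reduction_def)
    with s(2) have "length s = 3"
      by auto
    then obtain x y w where "s = [x, y, w]"
      by (auto simp: numeral_3_eq_3 length_Suc_conv)
    with s have "subseq [x, y, w] a" "w < x \<and> y \<noteq> w"
      using reduction_triple_in_patterns_iff by auto
    then show "has_forbidden_triple a"
      unfolding has_forbidden_triple_def by blast
  next
    assume "has_forbidden_triple a"
    then show "\<exists>s. subseq s a \<and> reduction s \<in> ?pats"
      unfolding has_forbidden_triple_def reduction_triple_in_patterns_iff[symmetric] by blast
  qed
  then show ?thesis
    unfolding avoids_def contains_pattern_def by auto
qed

definition maxval :: "nat list \<Rightarrow> nat" where
  "maxval xs = Max (insert 0 (set xs))"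

lemma maxval_Nil [simp]: "maxval [] = 0"
  by (simp add: maxval_def)

lemma maxval_snoc [simp]: "maxval (xs @ [v]) = max (maxval xs) v"
proof -
  have "insert 0 (set (xs @ [v])) = insert v (insert 0 (set xs))" by auto
  then show ?thesis unfolding maxval_def by (simp add: max.commute)
qed

lemma le_maxval: "x \<in> set xs \<Longrightarrow> x \<le> maxval xs"
  by (simp add: maxval_def)

lemma less_maxval_imp_ex: "v < maxval xs \<Longrightarrow> \<exists>x\<in>set xs. v < x"
  using Max_in[of "insert 0 (set xs)"] unfolding maxval_def by auto

lemma has_forbidden_triple_snoc_iff:
  "has_forbidden_triple (a @ [v]) \<longleftrightarrow>
     has_forbidden_triple a \<or> (\<exists>x y. subseq [x, y] a \<and> v < x \<and> y \<noteq> v)"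
  unfolding has_forbidden_triple_def subseq_triple_snoc_iff by blast

lemma new_forbidden_triple_iff:
  assumes "\<not> has_forbidden_triple a"
  shows "(\<exists>x y. subseq [x, y] a \<and> v < x \<and> y \<noteq> v) \<longleftrightarrow> \<not> (v = last a \<or> maxval (butlast a) \<le> v)"
proof (cases a rule: rev_cases)
  case (snoc b l)
  show ?thesis
  proof
    assume "\<exists>x y. subseq [x, y] a \<and> v < x \<and> y \<noteq> v"
    then obtain x y where xy: "subseq [x, y] (b @ [l])" "v < x" "y \<noteq> v"
      using snoc by blast
    then have "x \<in> set b"
      by (auto simp: subseq_pair_snoc_iff dest: subseq_pair_imp_in_set)
    then have "\<not> maxval b \<le> v"
      using le_maxval xy(2) by fastforce
    moreover have "v \<noteq> l"
    proof
      assume "v = l"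
      then have "subseq [x, y] b"
        using xy by (auto simp: subseq_pair_snoc_iff)
      then have "subseq [x, y, l] a"
        by (simp add: snoc subseq_triple_snoc_iff)
      with xy \<open>v = l\<close> assms show False
        unfolding has_forbidden_triple_def by blast
    qed
    ultimately show "\<not> (v = last a \<or> maxval (butlast a) \<le> v)"
      using snoc by simp
  next
    assume "\<not> (v = last a \<or> maxval (butlast a) \<le> v)"
    then have "v \<noteq> l" "v < maxval b"
      using snoc by auto
    then obtain x where "x \<in> set b" "v < x"
      using less_maxval_imp_ex by blast
    with \<open>v \<noteq> l\<close> show "\<exists>x y. subseq [x, y] a \<and> v < x \<and> y \<noteq> v"
      unfolding snoc subseq_pair_snoc_iff by blast
  qed
qed simp

lemma no_forbidden_triple_snoc_iff:
  "\<not> has_forbidden_triple (a @ [v]) \<longleftrightarrow>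
     \<not> has_forbidden_triple a \<and> (v = last a \<or> maxval (butlast a) \<le> v)"
  by (cases "has_forbidden_triple a") (simp_all add: has_forbidden_triple_snoc_iff new_forbidden_triple_iff)

definition good_seqs :: "nat \<Rightarrow> nat list set" where
  "good_seqs n = {a \<in> inversion_seqs n. \<not> has_forbidden_triple a}"

lemma I_count_eq_card_good_seqs: "I_count n = card (good_seqs n)"
  unfolding I_count_def good_seqs_def avoids_patterns_iff ..

lemma snoc_in_inversion_seqs_iff:
  "a @ [v] \<in> inversion_seqs (Suc n) \<longleftrightarrow> a \<in> inversion_seqs n \<and> v \<le> n"
proof -
  have "(\<forall>i<Suc n. (a @ [v]) ! i \<le> i) \<longleftrightarrow> (\<forall>i<n. a ! i \<le> i) \<and> v \<le> n" if "length a = n"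
    using that by (auto simp: nth_append less_Suc_eq)
  then show ?thesis
    unfolding inversion_seqs_def by auto
qed

lemma inversion_seq_entries_le:
  assumes "a \<in> inversion_seqs n" "x \<in> set a"
  shows "x \<le> n"
proof -
  obtain i where "i < length a" "x = a ! i"
    using assms(2) by (auto simp: in_set_conv_nth)
  with assms(1) show ?thesis
    by (auto simp: inversion_seqs_def)
qed

lemma finite_inversion_seqs: "finite (inversion_seqs n)"
proof (rule finite_subset)
  show "inversion_seqs n \<subseteq> {xs. set xs \<subseteq> {..n} \<and> length xs = n}"
    using inversion_seq_entries_le by (auto simp: inversion_seqs_def)
qed (rule finite_lists_length_eq, simp)

lemma maxval_inversion_seq: "a \<in> inversion_seqs n \<Longrightarrow> maxval a \<le> n"
  using inversion_seq_entries_le by (simp add: maxval_def)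

lemma finite_good_seqs: "finite (good_seqs n)"
  using finite_inversion_seqs by (simp add: good_seqs_def)

lemma good_seqs_0: "good_seqs 0 = {[]}"
  by (auto simp: good_seqs_def inversion_seqs_def has_forbidden_triple_def)

lemma good_seq_length_maxval: "a \<in> good_seqs n \<Longrightarrow> length a = n \<and> maxval a \<le> n"
  by (auto simp: good_seqs_def inversion_seqs_def maxval_inversion_seq)

(* For a = [] the junk value last [] is harmless, since maxval (butlast []) = 0. *)
definition admissible :: "nat list \<Rightarrow> nat \<Rightarrow> nat set" where
  "admissible a n = {v. v \<le> n \<and> (v = last a \<or> maxval (butlast a) \<le> v)}"

lemma good_seqs_Suc:
  "good_seqs (Suc n) = (\<lambda>(a, v). a @ [v]) ` (SIGMA a:good_seqs n. admissible a n)"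
proof
  show "good_seqs (Suc n) \<subseteq> (\<lambda>(a, v). a @ [v]) ` (SIGMA a:good_seqs n. admissible a n)"
  proof
    fix b assume b: "b \<in> good_seqs (Suc n)"
    then have "b \<noteq> []"
      by (auto simp: good_seqs_def inversion_seqs_def)
    then obtain a v where "b = a @ [v]"
      by (cases b rule: rev_cases) auto
    with b show "b \<in> (\<lambda>(a, v). a @ [v]) ` (SIGMA a:good_seqs n. admissible a n)"
      by (force simp: good_seqs_def admissible_def snoc_in_inversion_seqs_iff no_forbidden_triple_snoc_iff)
  qed
qed (use no_forbidden_triple_snoc_iff in
      \<open>auto simp: good_seqs_def admissible_def snoc_in_inversion_seqs_iff\<close>)

lemma sum_good_seqs_Suc:
  "(\<Sum>b\<in>good_seqs (Suc n). f b) = (\<Sum>a\<in>good_seqs n. \<Sum>v\<in>admissible a n. f (a @ [v]))"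
proof -
  have "inj_on (\<lambda>(a, v). a @ [v]) (SIGMA a:good_seqs n. admissible a n)"
    by (auto simp: inj_on_def)
  then have "(\<Sum>b\<in>good_seqs (Suc n). f b) = (\<Sum>(a, v)\<in>(SIGMA a:good_seqs n. admissible a n). f (a @ [v]))"
    unfolding good_seqs_Suc by (simp add: sum.reindex case_prod_unfold)
  also have "\<dots> = (\<Sum>a\<in>good_seqs n. \<Sum>v\<in>admissible a n. f (a @ [v]))"
    by (rule sum.Sigma[symmetric]) (auto simp: finite_good_seqs admissible_def)
  finally show ?thesis .
qed

definition slack :: "nat list \<Rightarrow> nat" where
  "slack a = length a - maxval a"

definition low_admissible :: "nat list \<Rightarrow> nat set" where
  "low_admissible a = {v. v < maxval a \<and> (v = last a \<or> maxval (butlast a) \<le> v)}"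

lemma admissible_eq_Un_low_admissible:
  assumes "maxval a \<le> n"
  shows "admissible a n = {maxval a..n} \<union> low_admissible a"
  using assms by (cases a rule: rev_cases) (auto simp: admissible_def low_admissible_def)

lemma card_low_admissible_snoc:
  "card (low_admissible (a @ [v])) = (if v < maxval a then 1 else v - maxval a)"
proof -
  have "low_admissible (a @ [v]) = (if v < maxval a then {v} else {maxval a..<v})"
    by (auto simp: low_admissible_def)
  then show ?thesis by simp
qed

lemma sum_admissible_snoc:
  fixes f :: "nat \<Rightarrow> nat \<Rightarrow> 'a::comm_semiring_1"
  assumes "length a = n" "maxval a \<le> n"
  shows "(\<Sum>v\<in>admissible a n. f (slack (a @ [v])) (card (low_admissible (a @ [v])))) =
    (\<Sum>j\<le>slack a. f (j + 1) (slack a - j)) + of_nat (card (low_admissible a)) * f (slack a + 1) 1"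
proof -
  let ?g = "\<lambda>v. f (slack (a @ [v])) (card (low_admissible (a @ [v])))"
  have disj: "{maxval a..n} \<inter> low_admissible a = {}"
    by (auto simp: low_admissible_def)
  have fin: "finite (low_admissible a)"
    by (simp add: low_admissible_def)
  have high: "(\<Sum>v\<in>{maxval a..n}. ?g v) = (\<Sum>j\<le>slack a. f (j + 1) (slack a - j))"
    by (rule sum.reindex_bij_witness[where i = "\<lambda>j. n - j" and j = "\<lambda>v. n - v"])
       (use assms in \<open>auto simp: slack_def card_low_admissible_snoc Suc_diff_le\<close>)
  have low: "(\<Sum>v\<in>low_admissible a. ?g v) = of_nat (card (low_admissible a)) * f (slack a + 1) 1"
  proof -
    have "?g v = f (slack a + 1) 1" if "v \<in> low_admissible a" for v
    proof -
      have "v < maxval a"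
        using that by (simp add: low_admissible_def)
      with assms show ?thesis
        by (simp add: slack_def card_low_admissible_snoc Suc_diff_le)
    qed
    then show ?thesis by simp
  qed
  show ?thesis
    unfolding admissible_eq_Un_low_admissible[OF assms(2)] sum.union_disjoint[OF _ fin disj, simplified]
    by (simp add: high low)
qed

lemma geometric_sum_identity:
  "((U::'a::comm_ring_1) - 1) * (\<Sum>j\<le>s. U ^ (j + 1)) = U ^ (s + 2) - U"
  by (induction s) (simp_all add: algebra_simps)

lemma weighted_geometric_sum_identity:
  "((U::'a::comm_ring_1) - 1)^2 * (\<Sum>j\<le>s. of_nat (s - j) * U ^ (j + 1)) =
     U ^ (s + 2) - U^2 - of_nat s * U * (U - 1)"
proof (induction s)
  case (Suc s)
  have "(\<Sum>j\<le>Suc s. of_nat (Suc s - j) * U ^ (j + 1)) =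
      (\<Sum>j\<le>s. of_nat (s - j) * U ^ (j + 1) + U ^ (j + 1))"
    by (simp add: Suc_diff_le algebra_simps)
  also have "\<dots> = (\<Sum>j\<le>s. of_nat (s - j) * U ^ (j + 1)) + (\<Sum>j\<le>s. U ^ (j + 1))"
    by (rule sum.distrib)
  finally have "(U - 1)^2 * (\<Sum>j\<le>Suc s. of_nat (Suc s - j) * U ^ (j + 1)) =
      U ^ (s + 2) - U^2 - of_nat s * U * (U - 1) + (U - 1) * (U ^ (s + 2) - U)"
    unfolding Suc.IH[symmetric] geometric_sum_identity[symmetric] by (simp add: algebra_simps power2_eq_square)
  then show ?case
    by (simp add: algebra_simps)
qed (simp add: power2_eq_square)

definition slack_sum :: "'a::comm_ring_1 \<Rightarrow> nat \<Rightarrow> 'a" where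
  "slack_sum U n = (\<Sum>a\<in>good_seqs n. U ^ slack a)"

definition low_slack_sum :: "'a::comm_ring_1 \<Rightarrow> nat \<Rightarrow> 'a" where
  "low_slack_sum U n = (\<Sum>a\<in>good_seqs n. of_nat (card (low_admissible a)) * U ^ slack a)"

definition total_slack :: "nat \<Rightarrow> nat" where
  "total_slack n = (\<Sum>a\<in>good_seqs n. slack a)"

lemma slack_sum_0: "slack_sum U 0 = 1" and low_slack_sum_0: "low_slack_sum U 0 = 0"
  by (simp_all add: slack_sum_def low_slack_sum_def good_seqs_0 slack_def low_admissible_def)

lemma slack_sum_Suc:
  "((U::'a::comm_ring_1) - 1) * slack_sum U (Suc n) =
     U^2 * slack_sum U n - U * of_nat (card (good_seqs n)) + U * (U - 1) * low_slack_sum U n"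
proof -
  have "(U - 1) * slack_sum U (Suc n) =
      (\<Sum>a\<in>good_seqs n. (U - 1) * (\<Sum>v\<in>admissible a n. U ^ slack (a @ [v])))"
    unfolding slack_sum_def sum_good_seqs_Suc by (simp add: sum_distrib_left)
  also have "\<dots> = (\<Sum>a\<in>good_seqs n. U^2 * U ^ slack a - U +
      U * (U - 1) * (of_nat (card (low_admissible a)) * U ^ slack a))"
  proof (rule sum.cong[OF refl])
    fix a assume "a \<in> good_seqs n"
    then have "length a = n" "maxval a \<le> n"
      by (simp_all add: good_seq_length_maxval)
    note eq = sum_admissible_snoc[OF this, of "\<lambda>s c. U ^ s"]
    show "(U - 1) * (\<Sum>v\<in>admissible a n. U ^ slack (a @ [v])) = U^2 * U ^ slack a - U +
        U * (U - 1) * (of_nat (card (low_admissible a)) * U ^ slack a)"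
      unfolding eq distrib_left geometric_sum_identity by (simp add: algebra_simps power2_eq_square)
  qed
  also have "\<dots> = U^2 * slack_sum U n - U * of_nat (card (good_seqs n)) + U * (U - 1) * low_slack_sum U n"
    by (simp add: slack_sum_def low_slack_sum_def sum.distrib sum_subtractf sum_distrib_left mult.commute)
  finally show ?thesis .
qed

lemma low_slack_sum_Suc:
  "((U::'a::comm_ring_1) - 1)^2 * low_slack_sum U (Suc n) =
     U^2 * slack_sum U n - U^2 * of_nat (card (good_seqs n)) - U * (U - 1) * of_nat (total_slack n)
     + U * (U - 1)^2 * low_slack_sum U n"
proof -
  have "(U - 1)^2 * low_slack_sum U (Suc n) = (\<Sum>a\<in>good_seqs n. (U - 1)^2 *
      (\<Sum>v\<in>admissible a n. of_nat (card (low_admissible (a @ [v]))) * U ^ slack (a @ [v])))"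
    unfolding low_slack_sum_def sum_good_seqs_Suc by (simp add: sum_distrib_left)
  also have "\<dots> = (\<Sum>a\<in>good_seqs n. U^2 * U ^ slack a - U^2 - U * (U - 1) * of_nat (slack a) +
      U * (U - 1)^2 * (of_nat (card (low_admissible a)) * U ^ slack a))"
  proof (rule sum.cong[OF refl])
    fix a assume "a \<in> good_seqs n"
    then have "length a = n" "maxval a \<le> n"
      by (simp_all add: good_seq_length_maxval)
    note eq = sum_admissible_snoc[OF this, of "\<lambda>s c. of_nat c * U ^ s"]
    show "(U - 1)^2 * (\<Sum>v\<in>admissible a n. of_nat (card (low_admissible (a @ [v]))) * U ^ slack (a @ [v])) =
        U^2 * U ^ slack a - U^2 - U * (U - 1) * of_nat (slack a) +
        U * (U - 1)^2 * (of_nat (card (low_admissible a)) * U ^ slack a)"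
      unfolding eq distrib_left weighted_geometric_sum_identity by (simp add: algebra_simps power2_eq_square)
  qed
  also have "\<dots> = U^2 * slack_sum U n - U^2 * of_nat (card (good_seqs n)) -
      U * (U - 1) * of_nat (total_slack n) + U * (U - 1)^2 * low_slack_sum U n"
    by (simp add: slack_sum_def low_slack_sum_def total_slack_def sum.distrib sum_subtractf
        sum_distrib_left mult.commute)
  finally show ?thesis .
qed

(* The series \<Sum>n. z^n w n with z = t^2; its coefficient at t^m only involves w 0, ..., w m. *)
definition X2_series :: "(nat \<Rightarrow> 'a::comm_ring_1 fps) \<Rightarrow> 'a fps" where
  "X2_series w = Abs_fps (\<lambda>m. (\<Sum>n\<le>m. fps_X ^ (2 * n) * w n) $ m)"

lemma X2_series_nth:
  assumes "m \<le> k"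
  shows "X2_series w $ m = (\<Sum>n\<le>k. fps_X ^ (2 * n) * w n) $ m"
proof -
  have "{..k} = {..m} \<union> {m<..k}"
    using assms by auto
  then have "(\<Sum>n\<le>k. fps_X ^ (2 * n) * w n) =
      (\<Sum>n\<in>{..m} \<union> {m<..k}. fps_X ^ (2 * n) * w n)"
    by simp
  also have "\<dots> = (\<Sum>n\<le>m. fps_X ^ (2 * n) * w n) + (\<Sum>n\<in>{m<..k}. fps_X ^ (2 * n) * w n)"
    by (rule sum.union_disjoint) auto
  moreover have "(\<Sum>n\<in>{m<..k}. fps_X ^ (2 * n) * w n) $ m = 0"
    unfolding fps_sum_nth by (rule sum.neutral) (auto simp: fps_X_power_mult_nth)
  ultimately show ?thesis
    by (simp add: X2_series_def)
qed

lemma X2_series_add: "X2_series (\<lambda>n. v n + w n) = X2_series v + X2_series w"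
  by (rule fps_ext) (simp add: X2_series_def sum.distrib distrib_left)

lemma X2_series_diff: "X2_series (\<lambda>n. v n - w n) = X2_series v - X2_series w"
  by (rule fps_ext) (simp add: X2_series_def sum_subtractf right_diff_distrib)

lemma X2_series_mult_left: "X2_series (\<lambda>n. c * w n) = c * X2_series w"
proof (rule fps_ext)
  fix m
  let ?T = "\<Sum>n\<le>m. fps_X ^ (2 * n) * w n"
  have "(c * X2_series w) $ m = (\<Sum>i=0..m. c $ i * ?T $ (m - i))"
    unfolding fps_mult_nth by (rule sum.cong) (simp_all add: X2_series_nth[of _ m])
  also have "\<dots> = (c * ?T) $ m"
    by (simp add: fps_mult_nth)
  also have "c * ?T = (\<Sum>n\<le>m. fps_X ^ (2 * n) * (c * w n))"
    by (simp add: sum_distrib_left mult.left_commute)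
  finally show "X2_series (\<lambda>n. c * w n) $ m = (c * X2_series w) $ m"
    by (simp add: X2_series_def)
qed

lemma X2_series_Suc: "X2_series w = w 0 + fps_X^2 * X2_series (\<lambda>n. w (Suc n))"
proof (rule fps_ext)
  fix m
  have X_power: "fps_X ^ (2 * Suc n) = (fps_X^2 :: 'a fps) * fps_X ^ (2 * n)" for n
    by (simp flip: power_add)
  have "(\<Sum>n\<le>Suc m. fps_X ^ (2 * n) * w n) = w 0 + fps_X^2 * (\<Sum>n\<le>m. fps_X ^ (2 * n) * w (Suc n))"
    by (subst sum.atMost_Suc_shift) (simp add: X_power sum_distrib_left mult.assoc power2_eq_square)
  moreover have "(fps_X^2 * (\<Sum>n\<le>m. fps_X ^ (2 * n) * w (Suc n))) $ m =
      (fps_X^2 * X2_series (\<lambda>n. w (Suc n))) $ m"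
    using X2_series_nth[of "m - 2" m "\<lambda>n. w (Suc n)"] by (simp add: fps_X_power_mult_nth)
  ultimately show "X2_series w $ m = (w 0 + fps_X^2 * X2_series (\<lambda>n. w (Suc n))) $ m"
    using X2_series_nth[of m "Suc m" w] by simp
qed

definition count_gf :: "'a::comm_ring_1 fps" where
  "count_gf = X2_series (\<lambda>n. of_nat (card (good_seqs n)))"

definition total_slack_gf :: "'a::comm_ring_1 fps" where
  "total_slack_gf = X2_series (\<lambda>n. of_nat (total_slack n))"

definition slack_gf :: "'a::comm_ring_1 fps \<Rightarrow> 'a fps" where
  "slack_gf U = X2_series (slack_sum U)"

definition low_slack_gf :: "'a::comm_ring_1 fps \<Rightarrow> 'a fps" where
  "low_slack_gf U = X2_series (low_slack_sum U)"

lemma slack_gf_equation: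
  "(U - 1) * (slack_gf U - 1) = fps_X^2 * (U^2 * slack_gf U - U * count_gf + U * (U - 1) * low_slack_gf U)"
proof -
  have "(U - 1) * (slack_gf U - 1) = fps_X^2 * X2_series (\<lambda>n. (U - 1) * slack_sum U (Suc n))"
    unfolding slack_gf_def by (subst X2_series_Suc) (simp add: slack_sum_0 X2_series_mult_left mult.left_commute)
  also have "X2_series (\<lambda>n. (U - 1) * slack_sum U (Suc n)) = X2_series (\<lambda>n. U^2 * slack_sum U n -
      U * of_nat (card (good_seqs n)) + U * (U - 1) * low_slack_sum U n)"
    by (simp only: slack_sum_Suc)
  also have "\<dots> = U^2 * slack_gf U - U * count_gf + U * (U - 1) * low_slack_gf U"
    unfolding slack_gf_def count_gf_def low_slack_gf_def
    by (simp only: X2_series_add X2_series_diff X2_series_mult_left)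
  finally show ?thesis .
qed

lemma low_slack_gf_equation:
  "(U - 1)^2 * low_slack_gf U = fps_X^2 * (U^2 * slack_gf U - U^2 * count_gf -
     U * (U - 1) * total_slack_gf + U * (U - 1)^2 * low_slack_gf U)"
proof -
  have "(U - 1)^2 * low_slack_gf U = fps_X^2 * X2_series (\<lambda>n. (U - 1)^2 * low_slack_sum U (Suc n))"
    unfolding low_slack_gf_def by (subst X2_series_Suc) (simp add: low_slack_sum_0 X2_series_mult_left mult.left_commute)
  also have "X2_series (\<lambda>n. (U - 1)^2 * low_slack_sum U (Suc n)) = X2_series (\<lambda>n. U^2 * slack_sum U n -
      U^2 * of_nat (card (good_seqs n)) - U * (U - 1) * of_nat (total_slack n) + U * (U - 1)^2 * low_slack_sum U n)"
    by (simp only: low_slack_sum_Suc)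
  also have "\<dots> = U^2 * slack_gf U - U^2 * count_gf - U * (U - 1) * total_slack_gf + U * (U - 1)^2 * low_slack_gf U"
    unfolding slack_gf_def count_gf_def low_slack_gf_def total_slack_gf_def
    by (simp only: X2_series_add X2_series_diff X2_series_mult_left)
  finally show ?thesis .
qed

definition kernel_poly :: "'a::comm_ring_1 \<Rightarrow> 'a \<Rightarrow> 'a" where
  "kernel_poly z u = z^2*u^4 - 2*z^2*u^3 - 2*z*u^3 + 3*z*u^2 + u^2 - z*u - 2*u + 1"

lemma kernel_equation:
  fixes U :: "'a::comm_ring_1 fps"
  defines "z \<equiv> fps_X^2"
  shows "kernel_poly z U * slack_gf U =
    (U - 1)^2 * (1 - z * U) - z * U * (U - 1 + z * U) * count_gf - z^2 * U^2 * (U - 1) * total_slack_gf"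
proof -
  let ?W = "slack_gf U" and ?C = "low_slack_gf U" and ?F = "count_gf :: 'a fps" and ?D = "total_slack_gf :: 'a fps"
  have "kernel_poly z U * ?W -
      ((U - 1)^2 * (1 - z * U) - z * U * (U - 1 + z * U) * ?F - z^2 * U^2 * (U - 1) * ?D) =
    (U - 1) * (1 - z * U) * ((U - 1) * (?W - 1) - z * (U^2 * ?W - U * ?F + U * (U - 1) * ?C)) +
    z * U * ((U - 1)^2 * ?C - z * (U^2 * ?W - U^2 * ?F - U * (U - 1) * ?D + U * (U - 1)^2 * ?C))"
    unfolding kernel_poly_def by (simp add: algebra_simps power2_eq_square power3_eq_cube power4_eq_xxxx)
  also have "\<dots> = 0"
    unfolding z_def slack_gf_equation low_slack_gf_equation by simp
  finally show ?thesis
    by simp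
qed

lemma count_gf_eq_compose:
  "fps_compose (Abs_fps (\<lambda>n. real (I_count n))) (fps_X^2) = count_gf"
proof (rule fps_ext)
  fix m
  have "fps_compose (Abs_fps (\<lambda>n. real (I_count n))) (fps_X^2) $ m =
      (\<Sum>i=0..m. real (I_count i) * (if m = 2 * i then 1 else 0))"
    unfolding fps_compose_nth by (simp add: power_mult[symmetric])
  also have "\<dots> = (\<Sum>i\<le>m. (fps_X ^ (2 * i) * of_nat (card (good_seqs i)) :: real fps) $ m)"
    by (rule sum.cong) (auto simp: fps_X_power_mult_nth I_count_eq_card_good_seqs)
  also have "\<dots> = count_gf $ m"
    by (simp add: count_gf_def X2_series_def fps_sum_nth)
  finally show "fps_compose (Abs_fps (\<lambda>n. real (I_count n))) (fps_X^2) $ m = count_gf $ m" .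
qed

definition fps_agree :: "nat \<Rightarrow> 'a fps \<Rightarrow> 'a fps \<Rightarrow> bool" where
  "fps_agree n A B \<longleftrightarrow> (\<forall>i<n. A $ i = B $ i)"

definition fps_contraction :: "('a::comm_ring_1 fps \<Rightarrow> 'a fps) \<Rightarrow> bool" where
  "fps_contraction \<Phi> \<longleftrightarrow> (\<forall>n A B. fps_agree n A B \<longrightarrow> fps_agree (Suc n) (\<Phi> A) (\<Phi> B))"

lemma fps_agree_0 [simp]: "fps_agree 0 A B"
  by (simp add: fps_agree_def)

lemma fps_agree_refl [simp]: "fps_agree n A A"
  by (simp add: fps_agree_def)

lemma fps_agree_mono: "fps_agree n A B \<Longrightarrow> m \<le> n \<Longrightarrow> fps_agree m A B"
  by (simp add: fps_agree_def)

lemma fps_agree_trans: "fps_agree n A B \<Longrightarrow> fps_agree n B C \<Longrightarrow> fps_agree n A C"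
  by (simp add: fps_agree_def)

lemma fps_agree_add:
  "fps_agree n A B \<Longrightarrow> fps_agree n C D \<Longrightarrow> fps_agree n (A + C) (B + D)"
  by (simp add: fps_agree_def)

lemma fps_agree_diff:
  "fps_agree n A B \<Longrightarrow> fps_agree n C D \<Longrightarrow> fps_agree n (A - C) (B - D)"
  by (simp add: fps_agree_def)

lemma fps_agree_mult:
  fixes A B C D :: "'a::comm_ring_1 fps"
  shows "fps_agree n A B \<Longrightarrow> fps_agree n C D \<Longrightarrow> fps_agree n (A * C) (B * D)"
  unfolding fps_agree_def fps_mult_nth by (auto intro!: sum.cong)

lemma fps_agree_power:
  fixes A B :: "'a::comm_ring_1 fps"
  shows "fps_agree n A B \<Longrightarrow> fps_agree n (A ^ k) (B ^ k)"
  by (induction k) (simp_all add: fps_agree_mult)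

lemma fps_agree_X_mult:
  fixes A B :: "'a::comm_ring_1 fps"
  shows "fps_agree n A B \<Longrightarrow> fps_agree (Suc n) (fps_X * A) (fps_X * B)"
  unfolding fps_agree_def by (auto simp: less_Suc_eq_0_disj)

lemma fps_agree_shift:
  "fps_agree (Suc n) A B \<Longrightarrow> fps_agree n (fps_shift 1 A) (fps_shift 1 B)"
  by (simp add: fps_agree_def)

lemma fps_contraction_fixpoint_unique:
  assumes "fps_contraction \<Phi>" "\<Phi> A = A" "\<Phi> B = B"
  shows "A = B"
proof -
  have "fps_agree n A B" for n
  proof (induction n)
    case (Suc n)
    then show ?case
      using assms unfolding fps_contraction_def by metis
  qed simp
  then show ?thesis
    by (intro fps_ext) (auto simp: fps_agree_def)
qed

lemma fps_contraction_fixpoint_exists: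
  assumes contr: "fps_contraction \<Phi>"
  shows "\<exists>Y. \<Phi> Y = Y"
proof -
  define it where "it k = (\<Phi> ^^ k) 0" for k
  have it_Suc: "it (Suc k) = \<Phi> (it k)" for k
    by (simp add: it_def)
  have step: "fps_agree k (it k) (it (Suc k))" for k
  proof (induction k)
    case (Suc k)
    then show ?case
      using contr unfolding fps_contraction_def it_Suc[of "Suc k"] it_Suc[of k] by blast
  qed simp
  have far: "fps_agree k (it k) (it (k + d))" for k d
  proof (induction d)
    case (Suc d)
    have "fps_agree k (it (k + d)) (it (Suc (k + d)))"
      using step[of "k + d"] by (rule fps_agree_mono) simp
    with Suc show ?case
      using fps_agree_trans by fastforce
  qed simp
  define Y where "Y = Abs_fps (\<lambda>i. it (Suc i) $ i)"
  have Y_agree: "fps_agree n Y (it (Suc n))" for n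
    unfolding fps_agree_def
  proof (intro allI impI)
    fix i assume "i < n"
    have "fps_agree (Suc i) (it (Suc i)) (it (Suc i + (n - i)))"
      by (rule far)
    with \<open>i < n\<close> show "Y $ i = it (Suc n) $ i"
      by (simp add: fps_agree_def Y_def)
  qed
  have "\<Phi> Y = Y"
  proof (rule fps_ext)
    fix n
    have "fps_agree (Suc n) (\<Phi> Y) (\<Phi> (it (Suc n)))"
      using contr Y_agree unfolding fps_contraction_def by blast
    then have "\<Phi> Y $ n = it (Suc (Suc n)) $ n"
      by (simp add: fps_agree_def it_Suc)
    also have "\<dots> = it (Suc n) $ n"
      using step[of "Suc n"] by (simp add: fps_agree_def)
    finally show "\<Phi> Y $ n = Y $ n"
      by (simp add: Y_def)
  qed
  then show ?thesis by blast
qed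

lemma fps_X_mult_eq_iff_shift:
  fixes G V :: "'a::comm_ring_1 fps"
  assumes "G $ 0 = 0"
  shows "fps_X * V = G \<longleftrightarrow> V = fps_shift 1 G"
proof
  assume "fps_X * V = G"
  then show "V = fps_shift 1 G"
    by (metis fps_shift_times_fps_X' mult.commute)
next
  assume "V = fps_shift 1 G"
  then show "fps_X * V = G"
    using assms by (intro fps_ext) (simp add: fps_X_mult_nth)
qed

lemma fps_decompose_two_terms:
  fixes X :: "'a::comm_ring_1 fps"
  shows "X = fps_const (X $ 0) + fps_X * (fps_const (X $ 1) + fps_X * fps_shift 2 X)"
proof (rule fps_ext)
  fix n
  show "X $ n = (fps_const (X $ 0) + fps_X * (fps_const (X $ 1) + fps_X * fps_shift 2 X)) $ n"
    by (cases n; cases "n - 1") simp_all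
qed

definition K_poly :: "'a::comm_ring_1 \<Rightarrow> 'a \<Rightarrow> 'a" where
  "K_poly z x = z^2*x^4 - z^2*x^3 - 2*z*x^3 + 3*z*x^2 + x^2 - 2*z*x - 2*x + 1"

lemma Kt_eq_K_poly: "Kt X = K_poly (fps_X^2) X"
  by (simp add: Kt_def K_poly_def Let_def)

definition K_quot :: "'a::comm_ring_1 \<Rightarrow> 'a \<Rightarrow> 'a" where
  "K_quot z e = (1 + e) * (1 + e + 2 * e^2) - z * e * (1 + e)^3"

lemma K_poly_one_plus: "K_poly z (1 + e) = e^2 - z * K_quot z e"
  unfolding K_poly_def K_quot_def
  by (simp add: algebra_simps power2_eq_square power3_eq_cube power4_eq_xxxx)

lemma K_quot_nth_0: "e $ 0 = 0 \<Longrightarrow> K_quot (fps_X^2) e $ 0 = (1::'a::comm_ring_1)"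
  by (simp add: K_quot_def fps_power_zeroth)

lemma mult_inverse_eq_iff:
  fixes a b x y :: "'a::comm_ring_1"
  assumes "a * b = 1"
  shows "b * x = y \<longleftrightarrow> x = a * y"
  by (metis assms mult.assoc mult.commute mult_1)

(* K (1 + t W) = t^2 (W^2 - K_quot z (t W)); for W = s + t V with s^2 = 1 the root equation
   W^2 = K_quot z (t W) reads 2 s t V = K_quot z (t W) - 1 - t^2 V^2. *)
definition K_step :: "real \<Rightarrow> real fps \<Rightarrow> real fps" where
  "K_step s V = fps_shift 1 (fps_const (s / 2) *
     (K_quot (fps_X^2) (fps_X * (fps_const s + fps_X * V)) - 1 - fps_X^2 * V^2))"

lemma fps_agree_K_quot:
  fixes A B :: "'a::comm_ring_1 fps"
  assumes agree: "fps_agree n A B"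
  shows "fps_agree n (K_quot z A) (K_quot z B)"
  unfolding K_quot_def
  by (intro agree fps_agree_refl fps_agree_add fps_agree_diff fps_agree_mult fps_agree_power)

lemma fps_contraction_K_step: "fps_contraction (K_step s)"
  unfolding fps_contraction_def
proof (intro allI impI)
  fix n and A B :: "real fps"
  assume agree: "fps_agree n A B"
  have e: "fps_agree (Suc (Suc n)) (fps_X * (fps_const s + fps_X * A)) (fps_X * (fps_const s + fps_X * B))"
    by (intro fps_agree_X_mult fps_agree_add fps_agree_refl agree)
  have sq: "fps_agree (Suc (Suc n)) (fps_X * (fps_X * A^2)) (fps_X * (fps_X * B^2))"
    by (intro fps_agree_X_mult fps_agree_power agree)
  have "fps_agree (Suc (Suc n))
      (fps_const (s / 2) * (K_quot (fps_X^2) (fps_X * (fps_const s + fps_X * A)) - 1 - fps_X * (fps_X * A^2)))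
      (fps_const (s / 2) * (K_quot (fps_X^2) (fps_X * (fps_const s + fps_X * B)) - 1 - fps_X * (fps_X * B^2)))"
    by (intro sq fps_agree_refl fps_agree_mult fps_agree_diff fps_agree_K_quot e)
  then show "fps_agree (Suc n) (K_step s A) (K_step s B)"
    unfolding K_step_def power2_eq_square[of fps_X] mult.assoc by (rule fps_agree_shift)
qed

lemma K_root_iff_K_step_fixpoint:
  fixes V :: "real fps"
  assumes s: "s^2 = 1"
  shows "K_poly (fps_X^2) (1 + fps_X * (fps_const s + fps_X * V)) = 0 \<longleftrightarrow> K_step s V = V"
proof -
  define W where "W = fps_const s + fps_X * V"
  define G where "G = K_quot (fps_X^2) (fps_X * W) - 1 - fps_X^2 * V^2"
  have ss: "s * s = 1"
    using s by (simp add: power2_eq_square)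
  have G0: "(fps_const (s / 2) * G) $ 0 = 0"
    by (simp add: G_def K_quot_nth_0)
  have unit: "fps_const (s / 2) * fps_const (2 * s) = (1 :: real fps)"
    using ss by (simp flip: fps_const_mult)
  have "K_poly (fps_X^2) (1 + fps_X * W) = fps_X^2 * (fps_const (2 * s) * (fps_X * V) - G)"
  proof -
    have two_s: "fps_const (2 * s) = 2 * (fps_const s :: real fps)"
      by (simp add: fps_numeral_fps_const)
    show ?thesis
      unfolding K_poly_one_plus G_def W_def two_s power2_eq_square by (simp add: algebra_simps ss)
  qed
  then have "K_poly (fps_X^2) (1 + fps_X * W) = 0 \<longleftrightarrow> fps_const (2 * s) * (fps_X * V) = G"
    by simp
  also have "\<dots> \<longleftrightarrow> fps_X * V = fps_const (s / 2) * G"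
    by (rule mult_inverse_eq_iff[OF unit])
  also have "\<dots> \<longleftrightarrow> V = fps_shift 1 (fps_const (s / 2) * G)"
    by (rule fps_X_mult_eq_iff_shift[OF G0])
  also have "\<dots> \<longleftrightarrow> K_step s V = V"
    by (auto simp: K_step_def G_def W_def)
  finally show ?thesis
    by (simp add: W_def)
qed

lemma K_root_coeff1:
  fixes X :: "real fps"
  assumes "K_poly (fps_X^2) X = 0" "X $ 0 = 1"
  shows "(X $ 1)^2 = 1"
proof -
  define W where "W = fps_shift 1 (X - 1)"
  have X: "X = 1 + fps_X * W"
    using fps_X_mult_eq_iff_shift[of "X - 1" W] assms(2) by (simp add: W_def)
  have "fps_X^2 * (W^2 - K_quot (fps_X^2) (fps_X * W)) = 0"
    using assms(1) unfolding X K_poly_one_plus by (simp add: algebra_simps power_mult_distrib)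
  then have "(W^2) $ 0 = K_quot (fps_X^2) (fps_X * W) $ 0"
    by simp
  then show ?thesis
    by (simp add: K_quot_nth_0 fps_power_zeroth W_def)
qed

lemma K_root_ex1:
  assumes "s^2 = 1"
  shows "\<exists>!X :: real fps. K_poly (fps_X^2) X = 0 \<and> X $ 0 = 1 \<and> X $ 1 = s"
proof -
  obtain V where V: "K_step s V = V"
    using fps_contraction_fixpoint_exists[OF fps_contraction_K_step] by blast
  show ?thesis
  proof (rule ex1I)
    show "K_poly (fps_X^2) (1 + fps_X * (fps_const s + fps_X * V)) = 0 \<and>
        (1 + fps_X * (fps_const s + fps_X * V)) $ 0 = 1 \<and> (1 + fps_X * (fps_const s + fps_X * V)) $ 1 = s"
      using V K_root_iff_K_step_fixpoint[OF assms] by simp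
  next
    fix X :: "real fps"
    assume X: "K_poly (fps_X^2) X = 0 \<and> X $ 0 = 1 \<and> X $ 1 = s"
    then have X_eq: "X = 1 + fps_X * (fps_const s + fps_X * fps_shift 2 X)"
      using fps_decompose_two_terms[of X] by simp
    with X have "K_step s (fps_shift 2 X) = fps_shift 2 X"
      using K_root_iff_K_step_fixpoint[OF assms] by metis
    then have "fps_shift 2 X = V"
      using fps_contraction_fixpoint_unique[OF fps_contraction_K_step _ V] by blast
    with X_eq show "X = 1 + fps_X * (fps_const s + fps_X * V)"
      by simp
  qed
qed

lemma Kt_roots:
  "\<exists>X1 X2 :: real fps.
     X1 \<noteq> X2 \<and> Kt X1 = 0 \<and> Kt X2 = 0 \<and> X1 $ 0 = 1 \<and> X2 $ 0 = 1 \<and>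
     (\<forall>X. Kt X = 0 \<and> X $ 0 = 1 \<longrightarrow> X = X1 \<or> X = X2) \<and> X1 $ 1 = -1 \<and> X2 $ 1 = 1"
proof -
  obtain X1 where X1: "Kt X1 = 0" "X1 $ 0 = 1" "X1 $ 1 = -1"
    and uniq1: "\<And>X. Kt X = 0 \<and> X $ 0 = 1 \<and> X $ 1 = -1 \<Longrightarrow> X = X1"
    using K_root_ex1[of "-1"] unfolding Kt_eq_K_poly by auto
  obtain X2 where X2: "Kt X2 = 0" "X2 $ 0 = 1" "X2 $ 1 = 1"
    and uniq2: "\<And>X. Kt X = 0 \<and> X $ 0 = 1 \<and> X $ 1 = 1 \<Longrightarrow> X = X2"
    using K_root_ex1[of 1] unfolding Kt_eq_K_poly by auto
  have "X = X1 \<or> X = X2" if "Kt X = 0" "X $ 0 = 1" for X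
  proof -
    have "X $ 1 = 1 \<or> X $ 1 = -1"
      using K_root_coeff1[of X] that by (simp add: Kt_eq_K_poly power2_eq_1_iff)
    with that uniq1 uniq2 show ?thesis
      by blast
  qed
  moreover have "X1 \<noteq> X2"
    using X1(3) X2(3) by auto
  ultimately show ?thesis
    using X1 X2 by blast
qed

definition kernel_rest :: "'a::comm_ring_1 \<Rightarrow> 'a \<Rightarrow> 'a" where
  "kernel_rest z y = z^3*y^4 + 2*z^2*y^3 - 2*z*y^3 - 3*y^2 - 2*y"

lemma kernel_poly_one_plus: "kernel_poly z (1 + z * y) = z^2 * (y^2 - y - 1 + z * kernel_rest z y)"
  unfolding kernel_poly_def kernel_rest_def
  by (simp add: algebra_simps power2_eq_square power3_eq_cube power4_eq_xxxx)

(* For Y = y + t V with y^2 = y + 1 the bracket in kernel_poly_one_plus is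
   (2 y - 1) t V + t^2 V^2 + z kernel_rest z Y. *)
definition kernel_step :: "real \<Rightarrow> real fps \<Rightarrow> real fps" where
  "kernel_step y V = fps_shift 1 (fps_const (- 1 / (2 * y - 1)) *
     (fps_X^2 * (V^2 + kernel_rest (fps_X^2) (fps_const y + fps_X * V))))"

lemma fps_contraction_kernel_step: "fps_contraction (kernel_step y)"
  unfolding fps_contraction_def
proof (intro allI impI)
  fix n and A B :: "real fps"
  assume agree: "fps_agree n A B"
  have "fps_agree (Suc n) (fps_const y + fps_X * A) (fps_const y + fps_X * B)"
    by (intro fps_agree_add fps_agree_refl fps_agree_X_mult agree)
  then have Y_agree: "fps_agree n (fps_const y + fps_X * A) (fps_const y + fps_X * B)"
    by (rule fps_agree_mono) simp
  have inner: "fps_agree n (A^2 + kernel_rest (fps_X^2) (fps_const y + fps_X * A))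
      (B^2 + kernel_rest (fps_X^2) (fps_const y + fps_X * B))"
    unfolding kernel_rest_def
    by (intro agree Y_agree fps_agree_refl fps_agree_add fps_agree_diff fps_agree_mult fps_agree_power)
  then have "fps_agree (Suc (Suc n))
      (fps_const (- 1 / (2 * y - 1)) * (fps_X * (fps_X * (A^2 + kernel_rest (fps_X^2) (fps_const y + fps_X * A)))))
      (fps_const (- 1 / (2 * y - 1)) * (fps_X * (fps_X * (B^2 + kernel_rest (fps_X^2) (fps_const y + fps_X * B)))))"
    by (intro inner fps_agree_X_mult fps_agree_refl fps_agree_mult)
  then show "fps_agree (Suc n) (kernel_step y A) (kernel_step y B)"
    unfolding kernel_step_def power2_eq_square[of fps_X] mult.assoc by (rule fps_agree_shift)
qed

lemma kernel_root_of_fixpoint: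
  fixes V :: "real fps"
  assumes y: "y^2 - y - 1 = 0" and V: "kernel_step y V = V"
  shows "kernel_poly (fps_X^2) (1 + fps_X^2 * (fps_const y + fps_X * V)) = 0"
proof -
  define Y where "Y = fps_const y + fps_X * V"
  define H where "H = fps_X^2 * (V^2 + kernel_rest (fps_X^2) Y)"
  have "(2 * y - 1)^2 = 5"
    using y by (simp add: power2_eq_square algebra_simps)
  then have "2 * y - 1 \<noteq> 0"
    by auto
  then have unit: "fps_const (2 * y - 1) * fps_const (- 1 / (2 * y - 1)) = (-1 :: real fps)"
    by (simp flip: fps_const_mult fps_const_neg)
  have "fps_X * V = fps_const (- 1 / (2 * y - 1)) * H"
    using fps_X_mult_eq_iff_shift[of "fps_const (- 1 / (2 * y - 1)) * H" V] V
    by (simp add: kernel_step_def H_def Y_def)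
  then have "fps_const (2 * y - 1) * (fps_X * V) = (fps_const (2 * y - 1) * fps_const (- 1 / (2 * y - 1))) * H"
    by (simp only: mult.assoc)
  then have "fps_const (2 * y - 1) * (fps_X * V) + H = 0"
    unfolding unit by simp
  moreover have "Y^2 - Y - 1 + fps_X^2 * kernel_rest (fps_X^2) Y =
      fps_const (y^2 - y - 1) + (fps_const (2 * y - 1) * (fps_X * V) + H)"
  proof -
    have lin: "fps_const (2 * y - 1) = 2 * fps_const y - (1 :: real fps)"
      by (simp add: fps_numeral_fps_const)
    have quad: "fps_const (y^2 - y - 1) = fps_const y * fps_const y - fps_const y - (1 :: real fps)"
      by (simp add: power2_eq_square)
    show ?thesis
      unfolding Y_def H_def lin quad by (simp add: algebra_simps power2_eq_square)
  qed
  ultimately show ?thesis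
    unfolding kernel_poly_one_plus Y_def[symmetric] using y by simp
qed

lemma kernel_poly_two_roots:
  "\<exists>Y1 Y2 :: real fps. kernel_poly (fps_X^2) (1 + fps_X^2 * Y1) = 0 \<and>
     kernel_poly (fps_X^2) (1 + fps_X^2 * Y2) = 0 \<and> Y1 $ 0 \<noteq> Y2 $ 0"
proof -
  define y1 :: real where "y1 = (1 + sqrt 5) / 2"
  define y2 :: real where "y2 = (1 - sqrt 5) / 2"
  have "y1^2 - y1 - 1 = 0" "y2^2 - y2 - 1 = 0"
    by (simp_all add: y1_def y2_def power2_eq_square algebra_simps add_divide_distrib diff_divide_distrib)
  moreover obtain V1 V2 where "kernel_step y1 V1 = V1" "kernel_step y2 V2 = V2"
    using fps_contraction_fixpoint_exists[OF fps_contraction_kernel_step] by metis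
  moreover have "y1 \<noteq> y2"
    by (simp add: y1_def y2_def)
  ultimately show ?thesis
    using kernel_root_of_fixpoint
    by (intro exI[of _ "fps_const y1 + fps_X * V1"] exI[of _ "fps_const y2 + fps_X * V2"]) simp
qed

definition kernel_rem1 :: "'a::comm_ring_1 \<Rightarrow> 'a \<Rightarrow> 'a \<Rightarrow> 'a" where
  "kernel_rem1 z s p = z^2*s^3 - 2*z^2*s^2 - 2*z^2*s*p + 2*z^2*p - 2*z*s^2 + 3*z*s + 2*z*p - z + s - 2"

definition kernel_rem0 :: "'a::comm_ring_1 \<Rightarrow> 'a \<Rightarrow> 'a \<Rightarrow> 'a" where
  "kernel_rem0 z s p = 1 - p * (z^2*s^2 - 2*z^2*s - z^2*p - 2*z*s + 3*z + 1)"

lemma kernel_poly_mod_quadratic: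
  fixes z u s p :: "'a::idom"
  shows "kernel_poly z u = (u^2 - s*u + p) *
      (z^2*u^2 + z^2*s*u - 2*z^2*u + z^2*s^2 - 2*z^2*s - z^2*p - 2*z*u - 2*z*s + 3*z + 1)
    + kernel_rem1 z s p * u + kernel_rem0 z s p"
  unfolding kernel_poly_def kernel_rem1_def kernel_rem0_def by algebra

lemma kernel_rems_vanish:
  fixes z u1 u2 :: "'a::idom"
  assumes "kernel_poly z u1 = 0" "kernel_poly z u2 = 0" "u1 \<noteq> u2"
  shows "kernel_rem1 z (u1 + u2) (u1 * u2) = 0" "kernel_rem0 z (u1 + u2) (u1 * u2) = 0"
proof -
  let ?r1 = "kernel_rem1 z (u1 + u2) (u1 * u2)" and ?r0 = "kernel_rem0 z (u1 + u2) (u1 * u2)"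
  have "u^2 - (u1 + u2) * u + u1 * u2 = (u - u1) * (u - u2)" for u
    by (simp add: algebra_simps power2_eq_square)
  then have "?r1 * u1 + ?r0 = 0" "?r1 * u2 + ?r0 = 0"
    using assms(1,2) kernel_poly_mod_quadratic[of z _ "u1 + u2" "u1 * u2"] by simp_all
  have "?r1 * (u1 - u2) = (?r1 * u1 + ?r0) - (?r1 * u2 + ?r0)"
    by (simp add: algebra_simps)
  then have "?r1 * (u1 - u2) = 0"
    using \<open>?r1 * u1 + ?r0 = 0\<close> \<open>?r1 * u2 + ?r0 = 0\<close> by simp
  with assms(3) show "?r1 = 0"
    by simp
  with \<open>?r1 * u1 + ?r0 = 0\<close> show "?r0 = 0"
    by simp
qed

(* Since (z x)^4 kernel_poly z (1 / (z x)) = z^2 K_poly z x, the roots of the kernel other than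
   u1, u2 are 1 / (z x1), 1 / (z x2); this is the resulting factorization of K, valid modulo
   the relations of kernel_rems_vanish. *)
lemma K_poly_factor:
  fixes z x s p :: "'a::idom"
  shows "p * K_poly z x = (p*z^2*x^2 - s*z*x + 1) * (x^2 - p*(2*z + 2 - z*s)*x + p)
    + z*p*x^3 * kernel_rem1 z s p + (z*s*x^3 - x^2) * kernel_rem0 z s p"
  unfolding K_poly_def kernel_rem1_def kernel_rem0_def by algebra

lemma K_roots_product_sum:
  fixes z s p x1 x2 :: "'a::idom"
  assumes rems: "kernel_rem1 z s p = 0" "kernel_rem0 z s p = 0"
    and roots: "K_poly z x1 = 0" "K_poly z x2 = 0" "x1 \<noteq> x2"
    and nondeg: "p*z^2*x1^2 - s*z*x1 + 1 \<noteq> 0" "p*z^2*x2^2 - s*z*x2 + 1 \<noteq> 0"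
  shows "x1 * x2 = p" "x1 + x2 = p * (2*z + 2 - z*s)"
proof -
  let ?S = "p * (2*z + 2 - z*s)"
  have quadratic: "x^2 - ?S * x + p = 0" if "K_poly z x = 0" "p*z^2*x^2 - s*z*x + 1 \<noteq> 0" for x
    using K_poly_factor[of p z x s] that rems by (simp add: mult.assoc)
  have "(x1 - x2) * (x1 + x2 - ?S) = (x1^2 - ?S * x1 + p) - (x2^2 - ?S * x2 + p)"
    by (simp add: algebra_simps power2_eq_square)
  also have "\<dots> = 0"
    using quadratic roots nondeg by simp
  finally show sum: "x1 + x2 = ?S"
    using roots(3) by simp
  have "p = ?S * x1 - x1^2"
    using quadratic[OF roots(1) nondeg(1)] by (simp add: algebra_simps)
  then show "x1 * x2 = p"
    unfolding sum[symmetric] by (simp add: algebra_simps power2_eq_square)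
qed

lemma kernel_elimination:
  fixes z u1 u2 F D :: "'a::idom"
  defines "s \<equiv> u1 + u2" and "p \<equiv> u1 * u2"
  assumes eq1: "(u1 - 1)^2 * (1 - z*u1) = z*u1*(u1 - 1 + z*u1)*F + z^2*u1^2*(u1 - 1)*D"
    and eq2: "(u2 - 1)^2 * (1 - z*u2) = z*u2*(u2 - 1 + z*u2)*F + z^2*u2^2*(u2 - 1)*D"
    and "u1 \<noteq> u2" "z \<noteq> 0"
  shows "F * (z*p*(s - p - 1 - z*p)) = (s - p - 1)*(z*p - s + p)"
proof -
  define E where "E u = (u - 1)^2 * (1 - z*u) - z*u*(u - 1 + z*u)*F - z^2*u^2*(u - 1)*D" for u
  have "z^2*u2^2*(u2 - 1) * E u1 - z^2*u1^2*(u1 - 1) * E u2 =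
      (u1 - u2) * z^2 * ((s - p - 1)*(z*p - s + p) - F * (z*p*(s - p - 1 - z*p)))"
    unfolding E_def s_def p_def by algebra
  moreover have "E u1 = 0" "E u2 = 0"
    using eq1 eq2 by (simp_all add: E_def)
  ultimately show ?thesis
    using assms(5,6) by simp
qed

lemma kernel_closed_form:
  fixes z s p F :: "'a::idom"
  defines "S \<equiv> p * (2*z + 2 - z*s)"
  assumes rems: "kernel_rem1 z s p = 0" "kernel_rem0 z s p = 0"
    and F: "F * (z*p*(s - p - 1 - z*p)) = (s - p - 1)*(z*p - s + p)"
    and nondeg: "s - p - 1 - z*p \<noteq> 0"
  shows "F * (z*p*(z*p - z*S + z + 1)) = (p - S + 1)*(z*p - 1)"
proof -
  have "(s - p - 1 - z*p) * (F * (z*p*(z*p - z*S + z + 1)) - (p - S + 1)*(z*p - 1)) =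
      (z*p - z*S + z + 1) * (F * (z*p*(s - p - 1 - z*p))) - (p - S + 1)*(z*p - 1)*(s - p - 1 - z*p)"
    by (simp add: algebra_simps)
  also have "\<dots> = -(s - 1) * ((z + 1)*p*kernel_rem1 z s p + (z*s + s - 1)*kernel_rem0 z s p)"
    unfolding F S_def kernel_rem1_def kernel_rem0_def by algebra
  also have "\<dots> = 0"
    using rems by simp
  finally show ?thesis
    using nondeg by simp
qed

lemma kernel_method:
  fixes z u1 u2 x1 x2 F D :: "'a::idom"
  assumes kernel_roots: "kernel_poly z u1 = 0" "kernel_poly z u2 = 0" "u1 \<noteq> u2"
    and "z \<noteq> 0"
    and eq1: "(u1 - 1)^2 * (1 - z*u1) = z*u1*(u1 - 1 + z*u1)*F + z^2*u1^2*(u1 - 1)*D"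
    and eq2: "(u2 - 1)^2 * (1 - z*u2) = z*u2*(u2 - 1 + z*u2)*F + z^2*u2^2*(u2 - 1)*D"
    and nondeg_u: "(u1 - 1)*(u2 - 1) + z*u1*u2 \<noteq> 0"
    and K_roots: "K_poly z x1 = 0" "K_poly z x2 = 0" "x1 \<noteq> x2"
    and nondeg_x: "u1*u2*z^2*x1^2 - (u1 + u2)*z*x1 + 1 \<noteq> 0" "u1*u2*z^2*x2^2 - (u1 + u2)*z*x2 + 1 \<noteq> 0"
  shows "F * (x1*x2*z*(x1*x2*z - x1*z - x2*z + z + 1)) = (x1 - 1)*(x2 - 1)*(z*x1*x2 - 1)"
proof -
  define s where "s = u1 + u2"
  define p where "p = u1 * u2"
  have rems: "kernel_rem1 z s p = 0" "kernel_rem0 z s p = 0"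
    using kernel_rems_vanish[OF kernel_roots] by (simp_all add: s_def p_def)
  have x: "x1 * x2 = p" "x1 + x2 = p * (2*z + 2 - z*s)"
    using K_roots_product_sum[OF rems K_roots] nondeg_x by (simp_all add: s_def p_def mult.assoc mult.left_commute)
  have "s - p - 1 - z*p = - ((u1 - 1)*(u2 - 1) + z*u1*u2)"
    by (simp add: s_def p_def algebra_simps)
  with nondeg_u have "s - p - 1 - z*p \<noteq> 0"
    by (simp only: neg_equal_0_iff_equal not_False_eq_True)
  with kernel_closed_form[OF rems] kernel_elimination[OF eq1 eq2 kernel_roots(3) \<open>z \<noteq> 0\<close>]
  have "F * (z*p*(z*p - z*(x1 + x2) + z + 1)) = (p - (x1 + x2) + 1)*(z*p - 1)"
    unfolding x(2) s_def p_def by simp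
  then show ?thesis
    unfolding x(1)[symmetric] by (simp add: algebra_simps)
qed

lemma fps_nonzero_if_nth_0_eq_1: "f $ 0 = 1 \<Longrightarrow> f \<noteq> (0 :: 'a::zero_neq_one fps)"
  by auto

lemma count_gf_closed_form:
  fixes X1 X2 :: "real fps"
  defines "z \<equiv> fps_X^2 :: real fps"
  assumes roots: "Kt X1 = 0" "Kt X2 = 0" "X1 \<noteq> X2" and "X1 $ 0 = 1" "X2 $ 0 = 1"
  shows "count_gf * (X1 * X2 * z * (X1 * X2 * z - X1 * z - X2 * z + z + 1)) =
    (X1 - 1) * (X2 - 1) * (z * X1 * X2 - 1)"
proof -
  obtain Y1 Y2 where Y: "kernel_poly z (1 + z * Y1) = 0" "kernel_poly z (1 + z * Y2) = 0" "Y1 $ 0 \<noteq> Y2 $ 0"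
    using kernel_poly_two_roots unfolding z_def by blast
  define U1 where "U1 = 1 + z * Y1"
  define U2 where "U2 = 1 + z * Y2"
  have z: "z \<noteq> 0" "z $ 0 = 0"
    by (simp_all add: z_def)
  have "U1 \<noteq> U2"
    using Y(3) z by (auto simp: U1_def U2_def)
  have kernel_root_eq: "(U - 1)^2 * (1 - z * U) = z * U * (U - 1 + z * U) * count_gf + z^2 * U^2 * (U - 1) * total_slack_gf"
    if "kernel_poly z U = 0" for U
  proof -
    have "0 = (U - 1)^2 * (1 - z * U) - (z * U * (U - 1 + z * U) * count_gf + z^2 * U^2 * (U - 1) * total_slack_gf)"
      using kernel_equation[of U] that unfolding z_def by (simp add: diff_diff_eq)
    then show ?thesis
      by simp
  qed
  have "(U1 - 1) * (U2 - 1) + z * U1 * U2 = z * (z * Y1 * Y2 + U1 * U2)"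
    by (simp add: U1_def U2_def algebra_simps)
  moreover have "z * Y1 * Y2 + U1 * U2 \<noteq> 0"
    by (rule fps_nonzero_if_nth_0_eq_1) (simp add: U1_def U2_def z)
  ultimately have nondeg_u: "(U1 - 1) * (U2 - 1) + z * U1 * U2 \<noteq> 0"
    using z by simp
  have nondeg_x: "U1 * U2 * z^2 * X^2 - (U1 + U2) * z * X + 1 \<noteq> 0" for X
    by (rule fps_nonzero_if_nth_0_eq_1) (simp add: z fps_power_zeroth)
  have K_roots: "K_poly z X1 = 0" "K_poly z X2 = 0"
    using roots(1,2) by (simp_all add: Kt_eq_K_poly z_def)
  note kernel_roots = Y(1,2)[folded U1_def U2_def]
  show ?thesis
    by (rule kernel_method[OF kernel_roots \<open>U1 \<noteq> U2\<close> z(1) kernel_root_eq[OF kernel_roots(1)]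
          kernel_root_eq[OF kernel_roots(2)] nondeg_u K_roots roots(3) nondeg_x nondeg_x])
qed

theorem mainTheorem8:
  shows "\<exists>X1 X2 :: real fps.
     X1 \<noteq> X2 \<and> Kt X1 = 0 \<and> Kt X2 = 0 \<and> fps_nth X1 0 = 1 \<and> fps_nth X2 0 = 1 \<and>
     (\<forall>X :: real fps. Kt X = 0 \<and> fps_nth X 0 = 1 \<longrightarrow> X = X1 \<or> X = X2) \<and>
     fps_nth X1 1 = -1 \<and> fps_nth X2 1 = 1 \<and>
     (let Z = (fps_X ^ 2 :: real fps) in
       fps_to_fls (fps_compose (Abs_fps (\<lambda>n. real (I_count n))) Z) =
         fps_to_fls ((X1 - 1) * (X2 - 1) * (Z * X1 * X2 - 1)) /
         fps_to_fls (X1 * X2 * Z * (X1 * X2 * Z - X1 * Z - X2 * Z + Z + 1)))"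
proof -
  obtain X1 X2 :: "real fps" where X: "X1 \<noteq> X2" "Kt X1 = 0" "Kt X2 = 0" "X1 $ 0 = 1" "X2 $ 0 = 1"
      "\<forall>X. Kt X = 0 \<and> X $ 0 = 1 \<longrightarrow> X = X1 \<or> X = X2" "X1 $ 1 = -1" "X2 $ 1 = 1"
    using Kt_roots by blast
  define Z :: "real fps" where "Z = fps_X^2"
  define N where "N = (X1 - 1) * (X2 - 1) * (Z * X1 * X2 - 1)"
  define D where "D = X1 * X2 * Z * (X1 * X2 * Z - X1 * Z - X2 * Z + Z + 1)"
  have "count_gf * D = N"
    unfolding N_def D_def Z_def by (rule count_gf_closed_form[OF X(2,3,1,4,5)])
  moreover have "D \<noteq> 0"
  proof -
    have "X1 \<noteq> 0" "X2 \<noteq> 0" "X1 * X2 * Z - X1 * Z - X2 * Z + Z + 1 \<noteq> 0"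
      using X(4,5) by (auto simp: Z_def intro!: fps_nonzero_if_nth_0_eq_1)
    then show ?thesis
      by (simp add: D_def Z_def)
  qed
  ultimately have "fps_to_fls (fps_compose (Abs_fps (\<lambda>n. real (I_count n))) Z) = fps_to_fls N / fps_to_fls D"
    by (simp add: count_gf_eq_compose Z_def eq_divide_eq flip: fls_times_fps_to_fls)
  with X show ?thesis
    unfolding Let_def N_def D_def Z_def by blast
qed

end
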